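(* For every integer $n\ge 1$ and every real (or complex) number $t$, $$\det\bigl(C_{n,t}\cdot_L D_{n,t}\bigr) \;=\; -\bigl(F_{n+1}t+F_n\bigr)\bigl(F_{2n-1}t+F_{2n}\bigr)\;=\;-F_{n+1}F_{2n-1}\,t^{2}-\bigl(F_{n+1}F_{2n}+F_{n}F_{2n-1}\bigr)t-F_{n}F_{2n}.$$ In particular the first terms are $-t^2-2t-1,\ -4t^2-8t-3,\ -15t^2-34t-16$ for $n=1,2,3$.
   Context: $F_k$ denotes the Fibonacci numbers: $F_0=0$, $F_1=F_2=1$, $F_k=F_{k-1}+F_{k-2}$. Lorentz matrix product: for $A=[a_{ij}]$ of size $m\times n$ and $B=[b_{jk}]$ of size $n\times p$, $A\cdot_L B$ is the $m\times p$ matrix with $(i,k)$ entry $-a_{i1}b_{1k}+\sum_{j=2}^{n}a_{ij}b_{jk}$ (equivalently $A\cdot_L B=A\,\mathrm{diag}(-1,1,\dots,1)\,B$). $C_{n,t}$ is the $n\times n$ matrix with entries $c_{ij}$: $c_{ii}=2$ for $1\le i\le n-1$, $c_{nn}=t+1$, $c_{i,i+1}=1$ for $1\le i\le n-1$, $c_{ij}=1$ for all $i>j$, and $c_{ij}=0$ for $j>i+1$. (For $n=1$, $C_{1,t}=(t+1)$.) $D_{n,t}$ is the $n\times n$ matrix obtained from $C_{n,t}$ by replacing every superdiagonal entry $1$ by $-1$: entries $d_{ii}=2$ for $i\le n-1$, $d_{nn}=t+1$, $d_{i,i+1}=-1$, $d_{ij}=1$ for $i>j$, $d_{ij}=0$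 for $j>i+1$. (For $n=1$, $D_{1,t}=(t+1)$.) *)

theory Defs
  imports "Jordan_Normal_Form.Determinant" "HOL-Number_Theory.Fib"
begin

(* Matrices are 0-indexed here: entry (i,j) with 0 <= i,j < n corresponds to the paper's
   entry (i+1, j+1). *)

definition C_mat :: "nat \<Rightarrow> complex \<Rightarrow> complex mat" where
  "C_mat n t = mat n n (\<lambda>(i,j).
     if i = j then (if i = n - 1 then t + 1 else 2)
     else if j = i + 1 then 1
     else if i > j then 1
     else 0)"

definition D_mat :: "nat \<Rightarrow> complex \<Rightarrow> complex mat" where
  "D_mat n t = mat n n (\<lambda>(i,j).
     if i = j then (if i = n - 1 then t + 1 else 2)
     else if j = i + 1 then -1
     else if i > j then 1
     else 0)"

(* Lorentz matrix product: A *_L B = A * diag(-1,1,...,1) * B *)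
definition lorentz_mult :: "complex mat \<Rightarrow> complex mat \<Rightarrow> complex mat" where
  "lorentz_mult A B = mat (dim_row A) (dim_col B) (\<lambda>(i,k).
     - A $$ (i,0) * B $$ (0,k) + (\<Sum>j\<in>{1..<dim_col A}. A $$ (i,j) * B $$ (j,k)))"

end

theory Submission
  imports Defs
begin

(* Subtracting from every row of C_{n,t} and D_{n,t} the row above it leaves tridiagonal
   matrices with diagonals (2,1,...,1,t) and (2,3,...,3,t+2) and off-diagonal products -1 and 1.
   Their leading principal minors obey the continuant recurrences K_{m+2} = K_{m+1} + K_m and
   K_{m+2} = 3 K_{m+1} - K_m, solved by F_{m+2} and F_{2m+1}, so expanding along the last row gives
   det C_{n,t} = F_{n+1} t + F_n and det D_{n,t} = F_{2n-1} t + F_{2n}.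
   Finally A *_L B = A J B with J = diag(-1,1,...,1), hence det (C *_L D) = - det C * det D. *)

definition tridiag_mat :: "nat \<Rightarrow> (nat \<Rightarrow> 'a) \<Rightarrow> 'a \<Rightarrow> 'a \<Rightarrow> 'a :: zero mat" where
  "tridiag_mat n a b c = mat n n (\<lambda>(i,j).
     if i = j then a i else if i = j + 1 then b else if j = i + 1 then c else 0)"

lemma dim_tridiag_mat [simp]:
  "dim_row (tridiag_mat n a b c) = n" "dim_col (tridiag_mat n a b c) = n"
  by (simp_all add: tridiag_mat_def)

lemma tridiag_mat_carrier [simp]: "tridiag_mat n a b c \<in> carrier_mat n n"
  by (simp add: carrier_matI)

lemma tridiag_mat_cong:
  "(\<And>i. i < n \<Longrightarrow> a i = a' i) \<Longrightarrow> tridiag_mat n a b c = tridiag_mat n a' b c"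
  by (rule eq_matI) (auto simp: tridiag_mat_def)

lemma det_tridiag_mat_Suc_0 [simp]: "det (tridiag_mat (Suc 0) a b c) = a 0"
  by (simp add: det_single tridiag_mat_def)

lemma det_tridiag_mat_Suc_Suc:
  fixes a :: "nat \<Rightarrow> 'a :: comm_ring_1"
  shows "det (tridiag_mat (Suc (Suc m)) a b c)
           = a (Suc m) * det (tridiag_mat (Suc m) a b c) - b * c * det (tridiag_mat m a b c)"
proof -
  define A where "A = tridiag_mat (Suc (Suc m)) a b c"
  define M where "M = mat_delete A (Suc m) m"
  have A: "A \<in> carrier_mat (Suc (Suc m)) (Suc (Suc m))"
    by (simp add: A_def)
  have M: "M \<in> carrier_mat (Suc m) (Suc m)"
    by (simp add: M_def A_def mat_delete_def carrier_matI)
  have delete_A: "mat_delete A (Suc m) (Suc m) = tridiag_mat (Suc m) a b c"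
    by (rule eq_matI) (auto simp: A_def tridiag_mat_def mat_delete_def)
  have delete_M: "mat_delete M m m = tridiag_mat m a b c"
    by (rule eq_matI) (auto simp: M_def A_def tridiag_mat_def mat_delete_def)
  have M_last: "M $$ (m, m) = c"
    by (simp add: M_def A_def tridiag_mat_def mat_delete_def)
  have "det M = M $$ (m, m) * cofactor M m m"
    by (subst laplace_expansion_column[OF M, of m])
       (simp_all add: lessThan_Suc M_def A_def tridiag_mat_def mat_delete_def)
  also have "\<dots> = c * det (tridiag_mat m a b c)"
    by (simp add: cofactor_def delete_M M_last)
  finally have det_M: "det M = c * det (tridiag_mat m a b c)" .
  have "det A = b * cofactor A (Suc m) m + a (Suc m) * cofactor A (Suc m) (Suc m)"
    by (subst laplace_expansion_row[OF A, of "Suc m"])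
       (simp_all add: lessThan_Suc A_def tridiag_mat_def)
  then show ?thesis
    by (simp add: cofactor_def delete_A flip: M_def A_def) (simp add: det_M algebra_simps)
qed

lemma det_tridiag_mat_Suc_Suc_last:
  fixes a p :: "nat \<Rightarrow> 'a :: comm_ring_1"
  assumes "\<And>i. i \<le> m \<Longrightarrow> a i = p i"
  shows "det (tridiag_mat (Suc (Suc m)) a b c)
           = a (Suc m) * det (tridiag_mat (Suc m) p b c) - b * c * det (tridiag_mat m p b c)"
proof -
  have "tridiag_mat (Suc m) a b c = tridiag_mat (Suc m) p b c"
       "tridiag_mat m a b c = tridiag_mat m p b c"
    by (auto intro!: tridiag_mat_cong assms)
  then show ?thesis
    by (simp add: det_tridiag_mat_Suc_Suc)
qed

lemma of_nat_fib_add_3: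
  "(of_nat (fib (k + 3)) :: 'a :: comm_ring_1) = 2 * of_nat (fib (k + 2)) - of_nat (fib k)"
proof -
  have "fib (k + 3) + fib k = 2 * fib (k + 2)"
    by (simp add: eval_nat_numeral)
  then have "(of_nat (fib (k + 3)) :: 'a) + of_nat (fib k) = 2 * of_nat (fib (k + 2))"
    by (metis of_nat_add of_nat_mult of_nat_numeral)
  then show ?thesis
    by (simp add: eq_diff_eq)
qed

lemma of_nat_fib_add_4:
  "(of_nat (fib (k + 4)) :: 'a :: comm_ring_1) = 3 * of_nat (fib (k + 2)) - of_nat (fib k)"
proof -
  have "fib (k + 4) + fib k = 3 * fib (k + 2)"
    by (simp add: eval_nat_numeral)
  then have "(of_nat (fib (k + 4)) :: 'a) + of_nat (fib k) = 3 * of_nat (fib (k + 2))"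
    by (metis of_nat_add of_nat_mult of_nat_numeral)
  then show ?thesis
    by (simp add: eq_diff_eq)
qed

lemma det_tridiag_mat_fib:
  "det (tridiag_mat m (\<lambda>i. if i = 0 then 2 else 1) (-1) 1) = (of_nat (fib (m + 2)) :: 'a :: comm_ring_1)"
proof (induction m rule: fib.induct)
  case (3 m)
  then show ?case
    by (simp add: det_tridiag_mat_Suc_Suc del: fib.simps) (simp add: eval_nat_numeral)
qed (simp_all add: numeral_2_eq_2)

lemma det_tridiag_mat_fib_odd:
  "det (tridiag_mat m (\<lambda>i. if i = 0 then 2 else 3) (-1) (-1)) = (of_nat (fib (2 * m + 1)) :: 'a :: comm_ring_1)"
  (is "det (tridiag_mat m ?q _ _) = _")
proof (induction m rule: fib.induct)
  case (3 m)
  have "det (tridiag_mat (Suc (Suc m)) ?q (-1) (-1))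
          = 3 * det (tridiag_mat (Suc m) ?q (-1) (-1)) - det (tridiag_mat m ?q (-1) (-1))"
    by (simp add: det_tridiag_mat_Suc_Suc)
  also have "\<dots> = 3 * of_nat (fib (2 * m + 1 + 2)) - of_nat (fib (2 * m + 1))"
    using 3 by simp
  also have "\<dots> = of_nat (fib (2 * m + 1 + 4))"
    by (rule of_nat_fib_add_4[symmetric])
  also have "2 * m + 1 + 4 = 2 * Suc (Suc m) + 1"
    by simp
  finally show ?case .
qed (simp_all add: numeral_2_eq_2 numeral_3_eq_3)

definition row_difference_mat :: "nat \<Rightarrow> 'a :: ring_1 mat" where
  "row_difference_mat n = mat n n (\<lambda>(i,j). if j = i then 1 else if j + 1 = i then -1 else 0)"

lemma dim_row_difference_mat [simp]:
  "dim_row (row_difference_mat n) = n" "dim_col (row_difference_mat n) = n"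
  by (simp_all add: row_difference_mat_def)

lemma row_difference_mat_carrier [simp]: "row_difference_mat n \<in> carrier_mat n n"
  by (simp add: carrier_matI)

lemma det_row_difference_mat [simp]: "det (row_difference_mat n :: 'a :: comm_ring_1 mat) = 1"
proof -
  have "det (row_difference_mat n :: 'a mat) = prod_list (diag_mat (row_difference_mat n))"
    by (rule det_lower_triangular[of n]) (auto simp: row_difference_mat_def)
  also have "diag_mat (row_difference_mat n :: 'a mat) = replicate n 1"
    by (rule nth_equalityI) (auto simp: diag_mat_def row_difference_mat_def)
  finally show ?thesis
    by simp
qed

lemma index_row_difference_mat_mult:
  assumes "dim_row A = n" "i < n" "j < dim_col A"
  shows "(row_difference_mat n * A) $$ (i,j) = A $$ (i,j) - (if i > 0 then A $$ (i - 1, j) else 0)"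
proof -
  have "(row_difference_mat n * A) $$ (i,j)
          = (\<Sum>k<n. (if k = i then A $$ (k,j) else 0) - (if k + 1 = i then A $$ (k,j) else 0))"
    using assms unfolding row_difference_mat_def
    by (auto simp: scalar_prod_def atLeast0LessThan intro!: sum.cong)
  also have "\<dots> = A $$ (i,j) - (if i > 0 then A $$ (i - 1, j) else 0)"
    using assms by (cases i) (simp_all add: sum_subtractf sum.delta')
  finally show ?thesis .
qed

lemma det_row_difference_mat_mult:
  assumes "A \<in> carrier_mat n n"
  shows "det (row_difference_mat n * A) = det (A :: 'a :: comm_ring_1 mat)"
  using det_mult[OF row_difference_mat_carrier assms] by simp

lemma lorentz_mult_eq_mult_multrow:
  assumes A: "A \<in> carrier_mat m n" and B: "B \<in> carrier_mat n p" and "n > 0"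
  shows "lorentz_mult A B = A * multrow_mat n 0 (-1) * B"
proof -
  have "A * multrow_mat n 0 (-1) * B = A * multrow 0 (-1) B"
    using A B by (simp add: assoc_mult_mat[of A m n _ n B p] multrow_mat[OF B])
  also have "\<dots> = lorentz_mult A B"
  proof (rule eq_matI)
    fix i k assume "i < dim_row (lorentz_mult A B)" "k < dim_col (lorentz_mult A B)"
    then have i: "i < m" and k: "k < p"
      using A B by (simp_all add: lorentz_mult_def)
    have "(A * multrow 0 (-1) B) $$ (i,k)
            = (\<Sum>j<n. A $$ (i,j) * (if j = 0 then - B $$ (0,k) else B $$ (j,k)))"
      using A B i k by (auto simp: scalar_prod_def mat_multrow_def atLeast0LessThan intro!: sum.cong)
    also have "\<dots> = - A $$ (i,0) * B $$ (0,k) + (\<Sum>j\<in>{1..<n}. A $$ (i,j) * B $$ (j,k))"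
      using \<open>n > 0\<close> by (simp add: lessThan_atLeast0 sum.atLeast_Suc_lessThan)
    finally show "(A * multrow 0 (-1) B) $$ (i,k) = lorentz_mult A B $$ (i,k)"
      using A B i k by (simp add: lorentz_mult_def)
  qed (use A B in \<open>simp_all add: lorentz_mult_def mat_multrow_def\<close>)
  finally show ?thesis ..
qed

lemma det_lorentz_mult:
  assumes A: "A \<in> carrier_mat n n" and B: "B \<in> carrier_mat n n" and "n > 0"
  shows "det (lorentz_mult A B) = - det A * det B"
proof -
  have J: "multrow_mat n 0 (-1) \<in> carrier_mat n n"
    by simp
  have "det (lorentz_mult A B) = det A * det (multrow_mat n 0 (-1)) * det B"
    using lorentz_mult_eq_mult_multrow[OF A B \<open>n > 0\<close>]
    by (simp add: det_mult[OF mult_carrier_mat[OF A J] B] det_mult[OF A J])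
  then show ?thesis
    using det_multrow_mat[OF \<open>n > 0\<close>, of "-1 :: complex"] by simp
qed

lemma dim_C_mat [simp]: "dim_row (C_mat n t) = n" "dim_col (C_mat n t) = n"
  by (simp_all add: C_mat_def)

lemma C_mat_carrier [simp]: "C_mat n t \<in> carrier_mat n n"
  by (simp add: carrier_matI)

lemma dim_D_mat [simp]: "dim_row (D_mat n t) = n" "dim_col (D_mat n t) = n"
  by (simp_all add: D_mat_def)

lemma D_mat_carrier [simp]: "D_mat n t \<in> carrier_mat n n"
  by (simp add: carrier_matI)

lemma row_difference_mat_mult_C_mat:
  "row_difference_mat n * C_mat n t
     = tridiag_mat n (\<lambda>i. (if i = n - 1 then t + 1 else 2) - (if i > 0 then 1 else 0)) (-1) 1"
  (is "_ = ?T")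
proof (rule eq_matI)
  fix i j assume "i < dim_row ?T" "j < dim_col ?T"
  then have "i < n" "j < n"
    by simp_all
  then have "(row_difference_mat n * C_mat n t) $$ (i,j)
               = C_mat n t $$ (i,j) - (if i > 0 then C_mat n t $$ (i - 1, j) else 0)"
    by (intro index_row_difference_mat_mult) simp_all
  then show "(row_difference_mat n * C_mat n t) $$ (i,j) = ?T $$ (i,j)"
    using \<open>i < n\<close> \<open>j < n\<close> by (cases i) (auto simp: C_mat_def tridiag_mat_def)
qed simp_all

lemma row_difference_mat_mult_D_mat:
  "row_difference_mat n * D_mat n t
     = tridiag_mat n (\<lambda>i. (if i = n - 1 then t + 1 else 2) + (if i > 0 then 1 else 0)) (-1) (-1)"
  (is "_ = ?T")
proof (rule eq_matI)
  fix i j assume "i < dim_row ?T" "j < dim_col ?T"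
  then have "i < n" "j < n"
    by simp_all
  then have "(row_difference_mat n * D_mat n t) $$ (i,j)
               = D_mat n t $$ (i,j) - (if i > 0 then D_mat n t $$ (i - 1, j) else 0)"
    by (intro index_row_difference_mat_mult) simp_all
  then show "(row_difference_mat n * D_mat n t) $$ (i,j) = ?T $$ (i,j)"
    using \<open>i < n\<close> \<open>j < n\<close> by (cases i) (auto simp: D_mat_def tridiag_mat_def)
qed simp_all

lemma det_C_mat:
  assumes "n \<ge> 1"
  shows "det (C_mat n t) = of_nat (fib (n + 1)) * t + of_nat (fib n)"
proof -
  define a where "a = (\<lambda>i. (if i = n - 1 then t + 1 else 2) - (if i > 0 then 1 else (0 :: complex)))"
  have "det (C_mat n t) = det (row_difference_mat n * C_mat n t)"
    by (simp add: det_row_difference_mat_mult)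
  also have "\<dots> = det (tridiag_mat n a (-1) 1)"
    by (simp only: row_difference_mat_mult_C_mat a_def)
  also have "\<dots> = of_nat (fib (n + 1)) * t + of_nat (fib n)"
  proof (cases "n = 1")
    case True
    then show ?thesis
      by (simp add: a_def)
  next
    case False
    then obtain m where n: "n = Suc (Suc m)"
      using assms by (metis One_nat_def Suc_le_D le_SucE)
    have "det (tridiag_mat (Suc (Suc m)) a (-1) 1)
            = a (Suc m) * det (tridiag_mat (Suc m) (\<lambda>i. if i = 0 then 2 else 1) (-1) 1)
              - (-1) * 1 * det (tridiag_mat m (\<lambda>i. if i = 0 then 2 else 1) (-1) 1)"
      by (rule det_tridiag_mat_Suc_Suc_last) (auto simp: a_def n)
    then show ?thesis
      by (simp add: n a_def det_tridiag_mat_fib eval_nat_numeral del: fib.simps)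
  qed
  finally show ?thesis .
qed

lemma det_D_mat:
  assumes "n \<ge> 1"
  shows "det (D_mat n t) = of_nat (fib (2 * n - 1)) * t + of_nat (fib (2 * n))"
proof -
  define a where "a = (\<lambda>i. (if i = n - 1 then t + 1 else 2) + (if i > 0 then 1 else (0 :: complex)))"
  have "det (D_mat n t) = det (row_difference_mat n * D_mat n t)"
    by (simp add: det_row_difference_mat_mult)
  also have "\<dots> = det (tridiag_mat n a (-1) (-1))"
    by (simp only: row_difference_mat_mult_D_mat a_def)
  also have "\<dots> = of_nat (fib (2 * n - 1)) * t + of_nat (fib (2 * n))"
  proof (cases "n = 1")
    case True
    then show ?thesis
      by (simp add: a_def numeral_2_eq_2)
  next
    case False
    then obtain m where n: "n = Suc (Suc m)"
      using assms by (metis One_nat_def Suc_le_D le_SucE)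
    let ?k = "2 * m + 1"
    have index: "?k + 2 = 2 * n - 1" "?k + 3 = 2 * n"
      using n by simp_all
    have "det (tridiag_mat n a (-1) (-1))
            = a (Suc m) * det (tridiag_mat (Suc m) (\<lambda>i. if i = 0 then 2 else 3) (-1) (-1))
              - (-1) * (-1) * det (tridiag_mat m (\<lambda>i. if i = 0 then 2 else 3) (-1) (-1))"
      unfolding n by (rule det_tridiag_mat_Suc_Suc_last) (auto simp: a_def n)
    also have "\<dots> = (t + 2) * of_nat (fib (?k + 2)) - of_nat (fib ?k)"
      by (simp add: n a_def det_tridiag_mat_fib_odd del: fib.simps)
    also have "\<dots> = of_nat (fib (?k + 2)) * t + of_nat (fib (?k + 3))"
      by (subst of_nat_fib_add_3) (simp add: algebra_simps)
    finally show ?thesis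
      unfolding index .
  qed
  finally show ?thesis .
qed

theorem mainTheorem1:
  fixes n :: nat and t :: complex
  assumes "n \<ge> 1"
  shows "det (lorentz_mult (C_mat n t) (D_mat n t))
           = - (of_nat (fib (n+1)) * t + of_nat (fib n))
               * (of_nat (fib (2*n-1)) * t + of_nat (fib (2*n)))
       \<and> det (lorentz_mult (C_mat n t) (D_mat n t))
           = - of_nat (fib (n+1) * fib (2*n-1)) * t^2
             - of_nat (fib (n+1) * fib (2*n) + fib n * fib (2*n-1)) * t
             - of_nat (fib n * fib (2*n))"
proof -
  have "det (lorentz_mult (C_mat n t) (D_mat n t))
           = - (of_nat (fib (n+1)) * t + of_nat (fib n))
               * (of_nat (fib (2*n-1)) * t + of_nat (fib (2*n)))"
    using assms by (simp add: det_lorentz_mult[OF C_mat_carrier D_mat_carrier] det_C_mat det_D_mat)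
  moreover have "- (a * t + b) * (c * t + d) = - (a * c) * t^2 - (a * d + b * c) * t - b * d"
    for a b c d :: complex
    by (simp add: algebra_simps power2_eq_square)
  ultimately show ?thesis
    by simp
qed

end
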